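(* For every bracket pattern $w$: $w\subseteq A(w)$, $\min(A(w))=1$, and $\max(A(w))=\|w\|$. In particular $A(w)\subseteq A(A(w))$.
   Context: $\mathbb N=\{1,2,\dots\}$, $\mathbb N_0=\mathbb N\cup\{0\}$. A bracket pattern is a non-empty finite subset $w\subseteq\mathbb N$; $\|w\|:=\max(w)$. The completion of a bracket pattern $w$ is $A(w):=\{j-i\mid j\in w,\ i\in\mathbb N_0,\ i\notin w,\ i<j\}$. *)

theory Defs
  imports Main
begin

definition bracket_pattern :: "nat set \<Rightarrow> bool" where
  "bracket_pattern w \<longleftrightarrow> w \<noteq> {} \<and> finite w \<and> 0 \<notin> w"

definition pnorm :: "nat set \<Rightarrow> nat" where
  "pnorm w = Max w"

definition completion :: "nat set \<Rightarrow> nat set" where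
  "completion w = {j - i | j i. j \<in> w \<and> i \<notin> w \<and> i < j}"

end

theory Submission
  imports Defs
begin

text \<open>Every element j of w is the difference j - 0, and every difference is at least 1 and at
  most max w; the value 1 is attained as m - (m - 1) for the least element m of w. Since the
  completion then again avoids 0, it is contained in its own completion.\<close>

lemma completionI: "j \<in> w \<Longrightarrow> i \<notin> w \<Longrightarrow> i < j \<Longrightarrow> x = j - i \<Longrightarrow> x \<in> completion w"
  unfolding completion_def by blast

lemma completionE:
  assumes "x \<in> completion w"
  obtains j i where "j \<in> w" "i \<notin> w" "i < j" "x = j - i"
  using assms unfolding completion_def by blast

lemma subset_completion: "0 \<notin> w \<Longrightarrow> w \<subseteq> completion w"
  by (metis completionI diff_zero gr0I subsetI)

lemma completion_pos: "x \<in> completion w \<Longrightarrow> 0 < x"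
  by (auto elim: completionE)

lemma completion_le_Max: "finite w \<Longrightarrow> x \<in> completion w \<Longrightarrow> x \<le> Max w"
  by (auto elim!: completionE intro: le_trans[OF diff_le_self Max_ge])

lemma finite_completion: "finite w \<Longrightarrow> finite (completion w)"
  using completion_le_Max by (blast intro: finite_subset[of _ "{..Max w}"])

lemma one_in_completion:
  assumes "w \<noteq> {}" "0 \<notin> w"
  shows "1 \<in> completion w"
proof -
  define m where "m = (LEAST j. j \<in> w)"
  have "m \<in> w" using assms(1) unfolding m_def by (auto intro: LeastI)
  then have "0 < m" using assms(2) by (auto intro: gr0I)
  have "m - 1 \<notin> w" using \<open>0 < m\<close> not_less_Least[of "m - 1" "\<lambda>j. j \<in> w"]
    unfolding m_def by simp
  show ?thesis using \<open>m \<in> w\<close> \<open>m - 1 \<notin> w\<close> \<open>0 < m\<close> by (auto intro: completionI)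
qed

lemma Min_completion:
  assumes "bracket_pattern w"
  shows "Min (completion w) = 1"
proof (rule Min_eqI)
  show "finite (completion w)" "1 \<in> completion w"
    using assms finite_completion one_in_completion unfolding bracket_pattern_def by blast+
  show "1 \<le> x" if "x \<in> completion w" for x
    using completion_pos[OF that] by simp
qed

lemma Max_completion:
  assumes "bracket_pattern w"
  shows "Max (completion w) = pnorm w"
  unfolding pnorm_def
proof (rule Max_eqI)
  have "finite w" "w \<noteq> {}" "0 \<notin> w" using assms by (auto simp: bracket_pattern_def)
  then show "finite (completion w)" "Max w \<in> completion w"
    using finite_completion subset_completion Max_in by blast+
  show "x \<le> Max w" if "x \<in> completion w" for x
    using completion_le_Max \<open>finite w\<close> that by blast
qed

theorem lemma7p4:
  assumes "bracket_pattern w"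
  shows "w \<subseteq> completion w \<and> Min (completion w) = 1 \<and> Max (completion w) = pnorm w
         \<and> completion w \<subseteq> completion (completion w)"
proof -
  have "0 \<notin> w" using assms by (simp add: bracket_pattern_def)
  moreover have "0 \<notin> completion w" using completion_pos by blast
  ultimately show ?thesis
    using assms Min_completion Max_completion subset_completion by blast
qed

end
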